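(* Consider the coalition game and the closed-loop system described in the context (Euler–Lagrange agent dynamics with controller (C), auxiliary dynamics (A), multiplier dynamics (M), gradient-tracking dynamics (T) and action-estimation dynamics (E)). Suppose Assumptions 1–4 of the context hold. If a constant state $(\mathbf{x}^*,\hat\mu^*,\hat d^*,\hat{\mathbf{x}}^*,\eta^*,\vartheta^*,\omega^*,\lambda^*,\rho^*,\xi^*,\zeta^*,s^* )$ (with all time derivatives of these closed-loop states equal to zero) is an equilibrium of this closed-loop system, then $\mathbf{x}^*=\operatorname{col}\{x_{11}^*,\dots,x_{Nm_N}^*\}$ is a Nash equilibrium of the coalition game.
   Context: Coalition game. There are $N$ coalitions $\mathbb{N}=\{1,\dots,N\}$; coalition $i$ has agents $\mathbb{V}_i=\{1,\dots,m_i\}$; $n=\sum_i m_i$. Agent $(i,j)$ has action $x_{ij}\in\mathbb{R}^r$; $\mathbf{x}_i=\operatorname{col}\{x_{i1},\dots,x_{im_i}\}$, $\mathbf{x}=\operatorname{col}\{\mathbf{x}_1,\dots,\mathbf{x}_N\}=(\mathbf{x}_i,\mathbf{x}_{-i})$. Agent $(i,j)$ has cost $J_{ij}(\mathbf{x})$; coalition $i$ has cost $J_i(\mathbf{x})=\frac1{m_i}\sum_{j=1}^{m_i}J_{ij}(\mathbf{x})$. Local constraints $\Omega_{ij}=\{x_{ij}\in\mathbb{R}^r: B_{ij}x_{ij}\le b_{ij}\}$ and coupling constraints $\mathbb{X}_i=\{\mathbf{x}_i: \sum_{j}G_{ij}x_{ij}\le\sum_j g_{ij}\}$, with constant matrices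 $B_{ij}$, $G_{ij}\in\mathbb{R}^{p\times r}$ and vectors $b_{ij},g_{ij}$ (inequalities elementwise). Let $\bm\Omega=\prod_{i,j}\Omega_{ij}$, $\mathbb{X}=\prod_i\mathbb{X}_i$. A profile $\mathbf{x}^\star$ is a Nash equilibrium (NE) if for every $i$, $J_i(\mathbf{x}_i^\star,\mathbf{x}_{-i}^\star)\le J_i(\mathbf{x}_i,\mathbf{x}_{-i}^\star)$ for all $\mathbf{x}_i$ with $(\mathbf{x}_i,\mathbf{x}_{-i}^\star)\in\bm\Omega\cap\mathbb{X}$. Assumption 1: each $J_{ij}$ is continuously differentiable and $\hbar$-strongly convex in $\mathbf{x}_i$ for any fixed $\mathbf{x}_{-i}\in\prod_{k\ne i}\bm\Omega_k$. Assumption 2: each $\partial J_{ij}/\partial\mathbf{x}_i$ is globally Lipschitz with constant $\ell$. Assumption 3: for each $i$ there is $\mathbf{x}_i$ with $\sum_j G_{ij}x_{ij}<\sum_j g_{ij}$ and $B_{ij}x_{ij}<b_{ij}$ for all $j$. Assumption 4: for each $i$ the communication graph $\mathcal{G}_i$ on $\mathbb{V}_i$ (adjacency $[a^i_{jl}]$, symmetric 0/1) is undirected and connected; the graph $\bar{\mathcal{G}}$ on all $n$ agents, reindexed so agent $(i,j)$ has index $\sum_{l<i}m_l+j$, with adjacency $[\bar a_{pl}]$ ($\bar a_{pl}=1$ iff $(p,l)$ is an edge), is directed and strongly connected. Agent dynamics: $E_{ij}(x_{ij})\ddot x_{ij}+C_{ij}(x_{ij},\dot x_{ij})\dot x_{ij}+D_{ij}(x_{ij})=u_{ij}+d_{ij}$,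 where $d_{ij}(t)$ is a disturbance bounded by an unknown constant $\tilde d_{ij}$, and the Euler–Lagrange structure admits a known regressor $\Upsilon_{ij}$ with $E_{ij}(x_{ij})\hat y+C_{ij}(x_{ij},\dot x_{ij})\tilde y+D_{ij}(x_{ij})=\Upsilon_{ij}(x_{ij},\dot x_{ij},\hat y,\tilde y)\mu_{ij}$ for all $\hat y,\tilde y$, with unknown constant $\mu_{ij}$. $\mathcal{P}_+$ is the elementwise projection onto $[0,\infty)$; $\operatorname{sgn}$ is elementwise sign. (C) $u_{ij}=\Upsilon_{ij}(x_{ij},\dot x_{ij},\ddot{\hat x}_{ij},\dot{\hat x}_{ij})\hat\mu_{ij}-\gamma e_{ij}-\operatorname{sgn}(e_{ij})\hat d_{ij}$, $\dot{\hat\mu}_{ij}=-\Upsilon_{ij}^\top e_{ij}$, $\dot{\hat d}_{ij}=e_{ij}^\top\operatorname{sgn}(e_{ij})$ ($\hat d_{ij}$ scalar), $e_{ij}=\dot x_{ij}-\dot{\hat x}_{ij}$, $\dot{\hat x}_{ij}=\vartheta_{ij}-(x_{ij}-\eta_{ij})$. (A) $\dot\eta_{ij}=\vartheta_{ij}$, $\dot\vartheta_{ij}=-\alpha\vartheta_{ij}-\big(\xi_{ijj}+G_{ij}^\top\mathcal{P}_+(\lambda_{ij})+B_{ij}^\top\mathcal{P}_+(\omega_{ij}+B_{ij}\eta_{ij}-b_{ij})\big)$. (M) $\dot\omega_{ij}=B_{ij}\vartheta_{ij}-\omega_{ij}+\mathcal{P}_+(\omega_{ij}+B_{ij}\eta_{ij}-b_{ij})$;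 $\dot\lambda_{ij}=-\lambda_{ij}+\mathcal{P}_+(\lambda_{ij})+G_{ij}\eta_{ij}-g_{ij}-\sum_l a^i_{jl}(\rho_{ij}-\rho_{il})-\sum_l a^i_{jl}(\mathcal{P}_+(\lambda_{ij})-\mathcal{P}_+(\lambda_{il}))$; $\dot\rho_{ij}=\sum_l a^i_{jl}(\mathcal{P}_+(\lambda_{ij})-\mathcal{P}_+(\lambda_{il}))$, with $\lambda_{ij},\rho_{ij}\in\mathbb{R}^p$. (T) for $k\in\mathbb{V}_i$: $\dot\xi_{ijk}=-\beta\big(\xi_{ijk}+\sum_l a^i_{jl}(\xi_{ijk}-\xi_{ilk})+\sum_l a^i_{jl}(\zeta_{ijk}-\zeta_{ilk})-\frac{\partial J_{ij}}{\partial x_{ik}}(\chi_{ij})\big)$, $\dot\zeta_{ijk}=\beta\sum_l a^i_{jl}(\xi_{ijk}-\xi_{ilk})$, where $\chi_{ij}=\operatorname{col}\{s_{p,1},\dots,s_{p,n}\}\in\mathbb{R}^{rn}$ with $p=\sum_{l<i}m_l+j$, and $\frac{\partial J_{ij}}{\partial x_{ik}}(\chi_{ij})$ is the gradient of $J_{ij}$ with respect to the block of agent $(i,k)$ evaluated at $\chi_{ij}$. (E) Writing $\varsigma_p:=\eta_{ij}$ for the reindexed agent $p$, each agent $p$ keeps estimates $s_{p,l}\in\mathbb{R}^r$ ($l\ne p$), $s_{p,p}=\varsigma_p$, and with $s_{l,-p}=\operatorname{col}\{s_{l,q}\}_{q\ne p}$: $\dot s_{p,-p}=-\kappa\sum_{l=1}^n\bar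 a_{pl}(s_{p,-p}-s_{l,-p})$. Here $\alpha,\beta,\gamma,\kappa>0$ are constant gains. *)

theory Defs
  imports "HOL-Analysis.Analysis"
begin

text \<open>Agents are the elements of a finite type 'a; coalitions the elements of a finite
type 'c; the map c assigns to each agent its coalition.  An action profile is an element
of (real^'r)^'a, i.e. the stacked vector col of all agents' actions in R^r.\<close>

definition vupd :: "'v^'a \<Rightarrow> 'a \<Rightarrow> 'v \<Rightarrow> 'v^'a" where
  "vupd x q z = (\<chi> l. if l = q then z else x $ l)"

definition pgrad :: "((real^'r)^'a \<Rightarrow> real) \<Rightarrow> (real^'r)^'a \<Rightarrow> 'a \<Rightarrow> real^'r" where
  "pgrad f x q = (SOME g. GDERIV (\<lambda>z. f (vupd x q z)) (x $ q) :> g)"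

definition cgrad :: "('a \<Rightarrow> 'c) \<Rightarrow> 'c \<Rightarrow> ((real^'r)^'a \<Rightarrow> real) \<Rightarrow> (real^'r)^'a \<Rightarrow> (real^'r)^'a" where
  "cgrad c i f x = (\<chi> q. if c q = i then pgrad f x q else 0)"

definition pplus :: "real^'p \<Rightarrow> real^'p" where
  "pplus v = (\<chi> k. max 0 (v $ k))"

definition vsgn :: "real^'r \<Rightarrow> real^'r" where
  "vsgn v = (\<chi> k. sgn (v $ k))"

text \<open>Local constraint set Omega_q = {z. B_q z \<le> b_q}; the matrix B_q has nq q rows,
row k being Brow q k, and b_q has entries bv q k (k < nq q).\<close>
definition Omega :: "('a \<Rightarrow> nat) \<Rightarrow> ('a \<Rightarrow> nat \<Rightarrow> real^'r) \<Rightarrow> ('a \<Rightarrow> nat \<Rightarrow> real) \<Rightarrow> 'a \<Rightarrow> (real^'r) set" where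
  "Omega nq Brow bv q = {z. \<forall>k<nq q. Brow q k \<bullet> z \<le> bv q k}"

definition Xset :: "('a \<Rightarrow> 'c) \<Rightarrow> ('a \<Rightarrow> real^'r^'p) \<Rightarrow> ('a \<Rightarrow> real^'p) \<Rightarrow> 'c \<Rightarrow> ((real^'r)^'a) set" where
  "Xset c G g i = {x. \<forall>k. (\<Sum>q\<in>{q. c q = i}. G q *v (x $ q)) $ k \<le> (\<Sum>q\<in>{q. c q = i}. g q) $ k}"

definition feasible :: "('a \<Rightarrow> 'c) \<Rightarrow> ('a \<Rightarrow> nat) \<Rightarrow> ('a \<Rightarrow> nat \<Rightarrow> real^'r) \<Rightarrow> ('a \<Rightarrow> nat \<Rightarrow> real)
    \<Rightarrow> ('a \<Rightarrow> real^'r^'p) \<Rightarrow> ('a \<Rightarrow> real^'p) \<Rightarrow> (real^'r)^'a \<Rightarrow> bool" where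
  "feasible c nq Brow bv G g x \<longleftrightarrow> (\<forall>q. x $ q \<in> Omega nq Brow bv q) \<and> (\<forall>i. x \<in> Xset c G g i)"

definition coal_cost :: "('a \<Rightarrow> 'c) \<Rightarrow> ('a \<Rightarrow> (real^'r)^'a \<Rightarrow> real) \<Rightarrow> 'c \<Rightarrow> (real^'r)^'a \<Rightarrow> real" where
  "coal_cost c J i x = (1 / real (card {q. c q = i})) * (\<Sum>q\<in>{q. c q = i}. J q x)"

definition is_NE :: "('a \<Rightarrow> 'c) \<Rightarrow> ('a \<Rightarrow> (real^'r)^'a \<Rightarrow> real) \<Rightarrow> ('a \<Rightarrow> nat) \<Rightarrow> ('a \<Rightarrow> nat \<Rightarrow> real^'r)
    \<Rightarrow> ('a \<Rightarrow> nat \<Rightarrow> real) \<Rightarrow> ('a \<Rightarrow> real^'r^'p) \<Rightarrow> ('a \<Rightarrow> real^'p) \<Rightarrow> (real^'r)^'a \<Rightarrow> bool" where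
  "is_NE c J nq Brow bv G g xs \<longleftrightarrow>
     (\<forall>i y. (\<forall>q. c q \<noteq> i \<longrightarrow> y $ q = xs $ q) \<and> feasible c nq Brow bv G g y
        \<longrightarrow> coal_cost c J i xs \<le> coal_cost c J i y)"

definition strongly_convex_block :: "('a \<Rightarrow> 'c) \<Rightarrow> ('a \<Rightarrow> nat) \<Rightarrow> ('a \<Rightarrow> nat \<Rightarrow> real^'r)
    \<Rightarrow> ('a \<Rightarrow> nat \<Rightarrow> real) \<Rightarrow> 'c \<Rightarrow> real \<Rightarrow> ((real^'r)^'a \<Rightarrow> real) \<Rightarrow> bool" where
  "strongly_convex_block c nq Brow bv i h f \<longleftrightarrow>
     (\<forall>x y t. (\<forall>q. c q \<noteq> i \<longrightarrow> x $ q \<in> Omega nq Brow bv q \<and> y $ q = x $ q) \<and> 0 \<le> t \<and> t \<le> 1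
        \<longrightarrow> f ((1 - t) *\<^sub>R x + t *\<^sub>R y)
            \<le> (1 - t) * f x + t * f y - h / 2 * t * (1 - t) * (norm (x - y))\<^sup>2)"

text \<open>Regressor times parameter vector: the regressor Upsilon_q(x,xd,yh,yt) has
nmu q columns (column k given by Ups q x xd yh yt k) and m is the parameter vector.\<close>
definition regr :: "('a \<Rightarrow> nat) \<Rightarrow> ('a \<Rightarrow> real^'r \<Rightarrow> real^'r \<Rightarrow> real^'r \<Rightarrow> real^'r \<Rightarrow> nat \<Rightarrow> real^'r)
    \<Rightarrow> 'a \<Rightarrow> real^'r \<Rightarrow> real^'r \<Rightarrow> real^'r \<Rightarrow> real^'r \<Rightarrow> (nat \<Rightarrow> real) \<Rightarrow> real^'r" where
  "regr nmu Ups q x xd yh yt m = (\<Sum>k<nmu q. m k *\<^sub>R Ups q x xd yh yt k)"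

end

theory Submission
  imports Defs
begin

text \<open>At a constant state the auxiliary variables encode the KKT conditions of every coalition's
problem.  Consensus over the strongly connected estimation graph makes every estimate s equal to the
actual profile.  Within a coalition the gradient trackers xi agree, and since the terms of a
symmetric Laplacian cancel in a sum over a closed vertex set, their common value is the average of
the members' partial gradients, i.e. the gradient of the coalition cost.  In the same way the
projected multipliers P+(lambda) agree on a coalition, and summing the lambda-equations gives
complementary slackness for the coupling constraint; the omega-equation is complementary slackness
for the local constraints.  By convexity these KKT conditions make each coalition's block a best
response.\<close>

lemma gderiv_imp_pgrad:
  fixes f :: "(real^'r)^'a \<Rightarrow> real"
  assumes "GDERIV f x :> D"
  shows "pgrad f x q = D $ q"
proof -
  have "linear (axis q :: real^'r \<Rightarrow> (real^'r)^'a)"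
    by (rule linearI) (auto simp: axis_def vec_eq_iff)
  then have "((\<lambda>z. (x - axis q (x $ q)) + axis q z) has_derivative axis q) (at (x $ q))"
    by (auto intro!: derivative_eq_intros bounded_linear_imp_has_derivative
        simp: linear_conv_bounded_linear)
  moreover have "(\<lambda>z. (x - axis q (x $ q)) + axis q z) = vupd x q"
    by (auto simp: vupd_def axis_def vec_eq_iff)
  moreover have "vupd x q (x $ q) = x"
    by (simp add: vupd_def vec_eq_iff)
  ultimately have "GDERIV (\<lambda>z. f (vupd x q z)) (x $ q) :> D $ q"
    using assms unfolding gderiv_def
    by (auto dest: has_derivative_compose simp: o_def inner_axis')
  then show ?thesis
    unfolding pgrad_def gderiv_def
  proof (rule some_equality)
    fix D' assume "((\<lambda>z. f (vupd x q z)) has_derivative (\<lambda>h. h \<bullet> D')) (at (x $ q))"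
    with \<open>GDERIV (\<lambda>z. f (vupd x q z)) (x $ q) :> D $ q\<close> show "D' = D $ q"
      unfolding gderiv_def by (metis has_derivative_unique vector_eq_ldot)
  qed
qed

lemma convex_segment_imp_above_gradient:
  fixes f :: "'v::real_inner \<Rightarrow> real"
  assumes "GDERIV f x :> D"
    and convex: "\<And>t. 0 \<le> t \<Longrightarrow> t \<le> 1 \<Longrightarrow> f (x + t *\<^sub>R (y - x)) \<le> (1 - t) * f x + t * f y"
  shows "(y - x) \<bullet> D \<le> f y - f x"
proof -
  define h where "h t = f (x + t *\<^sub>R (y - x))" for t
  have "(h has_real_derivative (y - x) \<bullet> D) (at 0)"
  proof -
    have "((\<lambda>t. x + t *\<^sub>R (y - x)) has_derivative (\<lambda>t. t *\<^sub>R (y - x))) (at 0)"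
      by (auto intro!: derivative_eq_intros)
    moreover have "(f has_derivative (\<lambda>v. v \<bullet> D)) (at (x + 0 *\<^sub>R (y - x)))"
      using assms(1) by (simp add: gderiv_def)
    ultimately have "(h has_derivative (\<lambda>t. (t *\<^sub>R (y - x)) \<bullet> D)) (at 0)"
      unfolding h_def by (auto dest: has_derivative_compose simp: o_def)
    then show ?thesis
      by (simp add: has_field_derivative_def mult.commute[of _ "(y - x) \<bullet> D"])
  qed
  then have "((\<lambda>t. (h t - h 0) / (t - 0)) \<longlongrightarrow> (y - x) \<bullet> D) (at_right 0)"
    by (simp add: has_field_derivative_iff filterlim_at_split)
  moreover have "\<forall>\<^sub>F t in at_right 0. (h t - h 0) / (t - 0) \<le> f y - f x"
  proof (rule eventually_at_rightI)
    fix t :: real assume t: "t \<in> {0<..<1}"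
    with convex[of t] have "h t - h 0 \<le> t * (f y - f x)"
      by (simp add: h_def algebra_simps)
    with t show "(h t - h 0) / (t - 0) \<le> f y - f x"
      by (simp add: divide_le_eq mult.commute)
  qed simp
  ultimately show ?thesis
    by (rule tendsto_upperbound) simp
qed

lemma strongly_convex_block_segment:
  assumes "strongly_convex_block c nq Brow bv i h f" "0 \<le> h"
    and "\<forall>q. c q \<noteq> i \<longrightarrow> x $ q \<in> Omega nq Brow bv q \<and> y $ q = x $ q"
    and "0 \<le> t" "t \<le> 1"
  shows "f (x + t *\<^sub>R (y - x)) \<le> (1 - t) * f x + t * f y"
proof -
  have "f ((1 - t) *\<^sub>R x + t *\<^sub>R y) \<le> (1 - t) * f x + t * f y - h / 2 * t * (1 - t) * (norm (x - y))\<^sup>2"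
    using assms unfolding strongly_convex_block_def by blast
  moreover have "0 \<le> h / 2 * t * (1 - t) * (norm (x - y))\<^sup>2"
    using assms by simp
  moreover have "(1 - t) *\<^sub>R x + t *\<^sub>R y = x + t *\<^sub>R (y - x)"
    by (simp add: algebra_simps)
  ultimately show ?thesis
    by simp
qed

definition closed_strongly_connected :: "('a \<Rightarrow> 'a \<Rightarrow> real) \<Rightarrow> 'a set \<Rightarrow> bool" where
  "closed_strongly_connected w T \<longleftrightarrow>
     (\<forall>p\<in>T. \<forall>l. w p l \<noteq> 0 \<longrightarrow> l \<in> T) \<and> (\<forall>p\<in>T. \<forall>l\<in>T. (\<lambda>u z. w u z \<noteq> 0)\<^sup>*\<^sup>* p l)"

lemma closed_strongly_connected_fibre:
  assumes "\<forall>p l. w p l \<noteq> 0 \<longrightarrow> c p = c l"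
    and "\<forall>p l. c p = c l \<longrightarrow> E\<^sup>*\<^sup>* p l" and "\<forall>u v. E u v \<longrightarrow> w u v \<noteq> 0"
  shows "closed_strongly_connected w {q. c q = c p}"
proof -
  have "E\<^sup>*\<^sup>* \<le> (\<lambda>u v. w u v \<noteq> 0)\<^sup>*\<^sup>*"
    using assms(3) by (intro rtranclp_mono) auto
  with assms(1,2) show ?thesis
    by (auto simp: closed_strongly_connected_def le_fun_def)
qed

lemma laplacian_max_principle:
  fixes v :: "'a::finite \<Rightarrow> real"
  assumes nonneg: "\<forall>p l. 0 \<le> w p l" and T: "closed_strongly_connected w T" and "q \<in> T"
    and harmonic: "\<forall>p\<in>T - {q}. (\<Sum>l\<in>UNIV. w p l * (v p - v l)) = 0"
    and "p \<in> T"
  shows "v p \<le> v q"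
proof -
  define M where "M = Max (v ` T)"
  have le_M: "v l \<le> M" if "l \<in> T" for l
    using that by (simp add: M_def)
  have "M \<in> v ` T"
    unfolding M_def using \<open>q \<in> T\<close> by (intro Max_in) auto
  then obtain p0 where p0: "p0 \<in> T" "v p0 = M"
    by blast
  have max_spreads: "z \<in> T \<and> v z = M" if u: "u \<in> T" "v u = M" "u \<noteq> q" and "w u z \<noteq> 0" for u z
  proof -
    have "0 \<le> w u l * (v u - v l)" for l
      using T u nonneg[rule_format, of u l] le_M[of l]
      by (cases "w u l = 0") (auto simp: closed_strongly_connected_def)
    moreover have "(\<Sum>l\<in>UNIV. w u l * (v u - v l)) = 0"
      using harmonic u by blast
    ultimately have "w u z * (v u - v z) = 0"
      by (simp add: sum_nonneg_eq_0_iff)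
    with T u \<open>w u z \<noteq> 0\<close> show ?thesis
      by (auto simp: closed_strongly_connected_def)
  qed
  have "v q = M \<or> (z \<in> T \<and> v z = M)" if "(\<lambda>u z. w u z \<noteq> 0)\<^sup>*\<^sup>* p0 z" for z
    using that
  proof (induction rule: rtranclp_induct)
    case base
    then show ?case using p0 by simp
  next
    case (step y z)
    then show ?case using max_spreads by blast
  qed
  moreover have "(\<lambda>u z. w u z \<noteq> 0)\<^sup>*\<^sup>* p0 q"
    using T p0 \<open>q \<in> T\<close> by (simp add: closed_strongly_connected_def)
  ultimately have "v q = M"
    by blast
  with le_M \<open>p \<in> T\<close> show ?thesis
    by simp
qed

lemma laplacian_consensus:
  fixes V :: "'a::finite \<Rightarrow> 'v::euclidean_space"
  assumes nonneg: "\<forall>p l. 0 \<le> w p l" and T: "closed_strongly_connected w T" and "q \<in> T"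
    and harmonic: "\<forall>p\<in>T - {q}. (\<Sum>l\<in>UNIV. w p l *\<^sub>R (V p - V l)) = 0"
    and "p \<in> T"
  shows "V p = V q"
proof (rule euclidean_eqI)
  fix b :: 'v assume "b \<in> Basis"
  have "\<forall>p\<in>T - {q}. (\<Sum>l\<in>UNIV. w p l * (\<sigma> * (V p \<bullet> b) - \<sigma> * (V l \<bullet> b))) = 0" for \<sigma>
  proof
    fix p assume "p \<in> T - {q}"
    then have "\<sigma> * ((\<Sum>l\<in>UNIV. w p l *\<^sub>R (V p - V l)) \<bullet> b) = 0"
      using harmonic by simp
    then show "(\<Sum>l\<in>UNIV. w p l * (\<sigma> * (V p \<bullet> b) - \<sigma> * (V l \<bullet> b))) = 0"
      by (simp add: inner_sum_left sum_distrib_left algebra_simps)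
  qed
  from laplacian_max_principle[OF nonneg T \<open>q \<in> T\<close> this \<open>p \<in> T\<close>, of 1]
    laplacian_max_principle[OF nonneg T \<open>q \<in> T\<close> this \<open>p \<in> T\<close>, of "-1"]
  show "V p \<bullet> b = V q \<bullet> b"
    by simp
qed

lemma sum_laplacian_eq_0:
  fixes Z :: "'a::finite \<Rightarrow> 'v::real_vector"
  assumes sym: "\<forall>p l. w p l = w l p" and closed: "\<forall>p\<in>T. \<forall>l. w p l \<noteq> 0 \<longrightarrow> l \<in> T"
  shows "(\<Sum>p\<in>T. \<Sum>l\<in>UNIV. w p l *\<^sub>R (Z p - Z l)) = 0"
proof -
  have "(\<Sum>l\<in>UNIV. w p l *\<^sub>R (Z p - Z l)) = (\<Sum>l\<in>T. w p l *\<^sub>R (Z p - Z l))" if "p \<in> T" for p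
    by (rule sum.mono_neutral_right) (use closed that in auto)
  moreover have "(\<Sum>p\<in>T. \<Sum>l\<in>T. w p l *\<^sub>R Z l) = (\<Sum>p\<in>T. \<Sum>l\<in>T. w p l *\<^sub>R Z p)"
    by (subst sum.swap) (simp add: sym)
  ultimately show ?thesis
    by (simp add: scaleR_diff_right sum_subtractf)
qed

lemma average_tracking_equilibrium:
  fixes xi zeta grad :: "'a::finite \<Rightarrow> 'v::euclidean_space"
  assumes nonneg: "\<forall>p l. 0 \<le> w p l" and sym: "\<forall>p l. w p l = w l p"
    and T: "closed_strongly_connected w T" and "k \<in> T"
    and agree: "\<forall>p\<in>T. (\<Sum>l\<in>UNIV. w p l *\<^sub>R (xi p - xi l)) = 0"
    and track: "\<forall>p\<in>T. xi p + (\<Sum>l\<in>UNIV. w p l *\<^sub>R (xi p - xi l))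
                       + (\<Sum>l\<in>UNIV. w p l *\<^sub>R (zeta p - zeta l)) = grad p"
  shows "real (card T) *\<^sub>R xi k = (\<Sum>p\<in>T. grad p)"
proof -
  have "(\<Sum>p\<in>T. grad p) = (\<Sum>p\<in>T. xi p + (\<Sum>l\<in>UNIV. w p l *\<^sub>R (zeta p - zeta l)))"
    using agree track by (intro sum.cong) auto
  also have "\<dots> = (\<Sum>p\<in>T. xi p) + (\<Sum>p\<in>T. \<Sum>l\<in>UNIV. w p l *\<^sub>R (zeta p - zeta l))"
    by (rule sum.distrib)
  also have "(\<Sum>p\<in>T. \<Sum>l\<in>UNIV. w p l *\<^sub>R (zeta p - zeta l)) = 0"
    using sym T by (intro sum_laplacian_eq_0) (auto simp: closed_strongly_connected_def)
  also have "(\<Sum>p\<in>T. xi p) = (\<Sum>p\<in>T. xi k)"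
    using laplacian_consensus[OF nonneg T \<open>k \<in> T\<close>] agree by (intro sum.cong) auto
  finally show ?thesis
    by (simp add: sum_constant_scaleR)
qed

lemma pplus_orthogonal: "pplus v \<bullet> (v - pplus v) = 0"
  unfolding inner_vec_def by (rule sum.neutral) (simp add: pplus_def max_def)

lemma multiplier_equilibrium:
  fixes lam rho r :: "'a::finite \<Rightarrow> real^'n"
  assumes nonneg: "\<forall>p l. 0 \<le> w p l" and sym: "\<forall>p l. w p l = w l p"
    and T: "closed_strongly_connected w T" and "k \<in> T"
    and agree: "\<forall>p\<in>T. (\<Sum>l\<in>UNIV. w p l *\<^sub>R (pplus (lam p) - pplus (lam l))) = 0"
    and eq: "\<forall>p\<in>T. - lam p + pplus (lam p) + r p - (\<Sum>l\<in>UNIV. w p l *\<^sub>R (rho p - rho l))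
                   - (\<Sum>l\<in>UNIV. w p l *\<^sub>R (pplus (lam p) - pplus (lam l))) = 0"
  shows "p \<in> T \<Longrightarrow> pplus (lam p) = pplus (lam k)"
    and "pplus (lam k) \<bullet> (\<Sum>p\<in>T. r p) = 0"
proof -
  have consensus: "pplus (lam p) = pplus (lam k)" if "p \<in> T" for p
    using agree that by (intro laplacian_consensus[OF nonneg T \<open>k \<in> T\<close>]) auto
  then show "p \<in> T \<Longrightarrow> pplus (lam p) = pplus (lam k)" .
  have closed: "\<forall>p\<in>T. \<forall>l. w p l \<noteq> 0 \<longrightarrow> l \<in> T"
    using T by (simp add: closed_strongly_connected_def)
  have "r p = (lam p - pplus (lam p)) + (\<Sum>l\<in>UNIV. w p l *\<^sub>R (rho p - rho l))" if "p \<in> T" for p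
    using eq agree that by (simp add: algebra_simps)
  then have "(\<Sum>p\<in>T. r p) = (\<Sum>p\<in>T. lam p - pplus (lam p))"
    using sum_laplacian_eq_0[OF sym closed, of rho] by (simp add: sum.distrib)
  also have "pplus (lam k) \<bullet> \<dots> = (\<Sum>p\<in>T. pplus (lam p) \<bullet> (lam p - pplus (lam p)))"
    using consensus by (simp add: inner_sum_right)
  finally show "pplus (lam k) \<bullet> (\<Sum>p\<in>T. r p) = 0"
    by (simp add: pplus_orthogonal)
qed

lemma kkt_imp_variational_inequality:
  fixes X y :: "(real^'r)^'a::finite" and L :: "real^'p"
  assumes L_nonneg: "\<forall>k. 0 \<le> L $ k"
    and L_slack: "L \<bullet> (\<Sum>p\<in>T. G p *v X $ p - g p) = 0"
    and om_nonneg: "\<forall>p\<in>T. \<forall>k<nq p. 0 \<le> om p k"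
    and om_slack: "\<forall>p\<in>T. \<forall>k<nq p. om p k * (Brow p k \<bullet> X $ p - bv p k) = 0"
    and y_local: "\<forall>p\<in>T. y $ p \<in> Omega nq Brow bv p"
    and y_coupled: "\<forall>k. (\<Sum>p\<in>T. G p *v y $ p) $ k \<le> (\<Sum>p\<in>T. g p) $ k"
  shows "(\<Sum>p\<in>T. (y $ p - X $ p) \<bullet> (transpose (G p) *v L + (\<Sum>k<nq p. om p k *\<^sub>R Brow p k))) \<le> 0"
proof -
  have "(\<Sum>p\<in>T. (y $ p - X $ p) \<bullet> (transpose (G p) *v L))
      = L \<bullet> (\<Sum>p\<in>T. G p *v y $ p - g p) - L \<bullet> (\<Sum>p\<in>T. G p *v X $ p - g p)"
    by (simp add: dot_lmul_matrix[symmetric] inner_commute[of _ L] inner_sum_right sum_subtractf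
        matrix_vector_mult_diff_distrib inner_diff_right inner_diff_left inner_commute[of "_ v* _"])
  also have "\<dots> \<le> 0"
    using L_nonneg y_coupled L_slack
    by (simp add: inner_vec_def sum_subtractf sum_nonpos mult_nonneg_nonpos)
  finally have coupled: "(\<Sum>p\<in>T. (y $ p - X $ p) \<bullet> (transpose (G p) *v L)) \<le> 0" .
  have local: "(y $ p - X $ p) \<bullet> (\<Sum>k<nq p. om p k *\<^sub>R Brow p k) \<le> 0" if "p \<in> T" for p
  proof -
    have split: "om p k * ((y $ p - X $ p) \<bullet> Brow p k)
        = om p k * (Brow p k \<bullet> y $ p - bv p k) - om p k * (Brow p k \<bullet> X $ p - bv p k)" for k
      by (simp add: inner_commute algebra_simps)
    have y_term: "om p k * (Brow p k \<bullet> y $ p - bv p k) \<le> 0" if "k < nq p" for k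
      using om_nonneg y_local \<open>p \<in> T\<close> that by (simp add: Omega_def mult_nonneg_nonpos)
    have X_term: "om p k * (Brow p k \<bullet> X $ p - bv p k) = 0" if "k < nq p" for k
      using om_slack \<open>p \<in> T\<close> that by blast
    show ?thesis
      unfolding inner_sum_right by (intro sum_nonpos) (simp add: split y_term X_term)
  qed
  then have "(\<Sum>p\<in>T. (y $ p - X $ p) \<bullet> (\<Sum>k<nq p. om p k *\<^sub>R Brow p k)) \<le> 0"
    by (rule sum_nonpos)
  with coupled show ?thesis
    by (simp add: inner_add_right sum.distrib)
qed

lemma coalition_kkt_imp_optimal:
  fixes c :: "'a::finite \<Rightarrow> 'c" and X y :: "(real^'r)^'a" and L :: "real^'p"
  assumes convex: "\<forall>q. c q = i \<longrightarrow> strongly_convex_block c nq Brow bv i h (J q)" "0 \<le> h"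
    and X_local: "\<forall>q. X $ q \<in> Omega nq Brow bv q"
    and grad: "\<forall>q. c q = i \<longrightarrow> GDERIV (J q) X :> D q"
    and cost_grad: "\<forall>p. c p = i \<longrightarrow> real (card {q. c q = i}) *\<^sub>R \<xi> p = (\<Sum>q\<in>{q. c q = i}. D q $ p)"
    and stationary: "\<forall>p. c p = i \<longrightarrow> \<xi> p + transpose (G p) *v L + (\<Sum>k<nq p. om p k *\<^sub>R Brow p k) = 0"
    and L_nonneg: "\<forall>k. 0 \<le> L $ k"
    and L_slack: "L \<bullet> (\<Sum>p\<in>{q. c q = i}. G p *v X $ p - g p) = 0"
    and om_nonneg: "\<forall>p. \<forall>k<nq p. 0 \<le> om p k"
    and om_slack: "\<forall>p. \<forall>k<nq p. om p k * (Brow p k \<bullet> X $ p - bv p k) = 0"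
    and y_other: "\<forall>q. c q \<noteq> i \<longrightarrow> y $ q = X $ q"
    and y_feasible: "feasible c nq Brow bv G g y"
  shows "coal_cost c J i X \<le> coal_cost c J i y"
proof -
  let ?T = "{q. c q = i}"
  define K where "K p = transpose (G p) *v L + (\<Sum>k<nq p. om p k *\<^sub>R Brow p k)" for p
  have "(\<Sum>p\<in>?T. (y $ p - X $ p) \<bullet> K p) \<le> 0"
    unfolding K_def using om_nonneg om_slack y_feasible
    by (intro kkt_imp_variational_inequality[where bv = bv, OF L_nonneg L_slack])
      (auto simp: feasible_def Xset_def)
  moreover have "\<xi> p = - K p" if "c p = i" for p
    using stationary[rule_format, OF that] unfolding K_def by (simp only: eq_neg_iff_add_eq_0 add.assoc)
  ultimately have "0 \<le> (\<Sum>p\<in>?T. (y $ p - X $ p) \<bullet> \<xi> p)"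
    by (simp add: sum_negf)
  then have "0 \<le> real (card ?T) * (\<Sum>p\<in>?T. (y $ p - X $ p) \<bullet> \<xi> p)"
    by simp
  also have "\<dots> = (\<Sum>p\<in>?T. (y $ p - X $ p) \<bullet> (\<Sum>q\<in>?T. D q $ p))"
    using cost_grad by (simp add: sum_distrib_left flip: inner_scaleR_right)
  also have "\<dots> = (y - X) \<bullet> (\<Sum>q\<in>?T. D q)"
    using y_other
    by (subst inner_vec_def, intro sum.mono_neutral_cong_left) auto
  also have "\<dots> \<le> (\<Sum>q\<in>?T. J q y - J q X)"
    unfolding inner_sum_right
  proof (rule sum_mono)
    fix q assume "q \<in> ?T"
    then show "(y - X) \<bullet> D q \<le> J q y - J q X"
      using grad X_local y_other
      by (intro convex_segment_imp_above_gradient strongly_convex_block_segment[OF _ \<open>0 \<le> h\<close>])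
        (auto intro: convex[rule_format])
  qed
  finally show ?thesis
    unfolding coal_cost_def by (simp add: sum_subtractf divide_right_mono)
qed

theorem lemma5:
  fixes c :: "'a::finite \<Rightarrow> 'c::finite"
    and J :: "'a \<Rightarrow> (real^'r::finite)^'a \<Rightarrow> real"
    and nq :: "'a \<Rightarrow> nat" and Brow :: "'a \<Rightarrow> nat \<Rightarrow> real^'r" and bv :: "'a \<Rightarrow> nat \<Rightarrow> real"
    and G :: "'a \<Rightarrow> real^'r^'p::finite" and g :: "'a \<Rightarrow> real^'p"
    and a abar :: "'a \<Rightarrow> 'a \<Rightarrow> real"
    and hbar ell alpha beta gamma kappa :: real
    and E :: "'a \<Rightarrow> real^'r \<Rightarrow> real^'r^'r"
    and Cm :: "'a \<Rightarrow> real^'r \<Rightarrow> real^'r \<Rightarrow> real^'r^'r"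
    and Dm :: "'a \<Rightarrow> real^'r \<Rightarrow> real^'r"
    and d :: "'a \<Rightarrow> real \<Rightarrow> real^'r"
    and nmu :: "'a \<Rightarrow> nat"
    and Ups :: "'a \<Rightarrow> real^'r \<Rightarrow> real^'r \<Rightarrow> real^'r \<Rightarrow> real^'r \<Rightarrow> nat \<Rightarrow> real^'r"
    and mu :: "'a \<Rightarrow> nat \<Rightarrow> real"
    and xs :: "'a \<Rightarrow> real^'r" and muh :: "'a \<Rightarrow> nat \<Rightarrow> real" and dh :: "'a \<Rightarrow> real"
    and xh eta th :: "'a \<Rightarrow> real^'r" and om :: "'a \<Rightarrow> nat \<Rightarrow> real"
    and lam rho :: "'a \<Rightarrow> real^'p"
    and xi zeta s :: "'a \<Rightarrow> 'a \<Rightarrow> real^'r"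
    and e u :: "'a \<Rightarrow> real^'r"
  assumes coal_nonempty: "\<forall>i. \<exists>q. c q = i"
    \<comment> \<open>Assumption 1\<close>
    and A1_C1: "\<forall>p. \<exists>DJ. continuous_on UNIV DJ \<and> (\<forall>x. GDERIV (J p) x :> DJ x)"
    and A1_hbar: "hbar > 0"
    and A1_sc: "\<forall>p. strongly_convex_block c nq Brow bv (c p) hbar (J p)"
    \<comment> \<open>Assumption 2\<close>
    and A2: "\<forall>p x y. norm (cgrad c (c p) (J p) x - cgrad c (c p) (J p) y) \<le> ell * norm (x - y)"
    \<comment> \<open>Assumption 3\<close>
    and A3: "\<forall>i. \<exists>x::(real^'r)^'a.
               (\<forall>k. (\<Sum>q\<in>{q. c q = i}. G q *v (x $ q)) $ k < (\<Sum>q\<in>{q. c q = i}. g q) $ k)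
             \<and> (\<forall>q. c q = i \<longrightarrow> (\<forall>k<nq q. Brow q k \<bullet> (x $ q) < bv q k))"
    \<comment> \<open>Assumption 4\<close>
    and A4_a01: "\<forall>p l. a p l = 0 \<or> a p l = 1"
    and A4_asym: "\<forall>p l. a p l = a l p"
    and A4_ain: "\<forall>p l. a p l \<noteq> 0 \<longrightarrow> c p = c l"
    and A4_aconn: "\<forall>p l. c p = c l \<longrightarrow> (\<lambda>u v. a u v = 1)\<^sup>*\<^sup>* p l"
    and A4_abar01: "\<forall>p l. abar p l = 0 \<or> abar p l = 1"
    and A4_abarconn: "\<forall>p l. (\<lambda>u v. abar u v = 1)\<^sup>*\<^sup>* p l"
    \<comment> \<open>Euler--Lagrange structure and bounded disturbances\<close>
    and d_bdd: "\<forall>p. \<exists>dt. \<forall>t. norm (d p t) \<le> dt"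
    and regressor: "\<forall>p x xd yh yt. E p x *v yh + Cm p x xd *v yt + Dm p x = regr nmu Ups p x xd yh yt (mu p)"
    \<comment> \<open>gains\<close>
    and gains: "alpha > 0" "beta > 0" "gamma > 0" "kappa > 0"
    \<comment> \<open>controller (C) evaluated at the constant state: xdot = 0, xhat-dot = th - (x - eta),
        xhat-ddot = 0 (all time derivatives vanish)\<close>
    and e_def: "\<forall>p. e p = 0 - (th p - (xs p - eta p))"
    and u_def: "\<forall>p. u p = regr nmu Ups p (xs p) 0 0 (th p - (xs p - eta p)) (muh p)
                          - gamma *\<^sub>R e p - dh p *\<^sub>R vsgn (e p)"
    \<comment> \<open>equilibrium conditions: all time derivatives of the closed-loop states are zero\<close>
    and eq_EL: "\<forall>p t. E p (xs p) *v 0 + Cm p (xs p) 0 *v 0 + Dm p (xs p) = u p + d p t"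
    and eq_xhat: "\<forall>p. th p - (xs p - eta p) = 0"
    and eq_muh: "\<forall>p. \<forall>k<nmu p. - (Ups p (xs p) 0 0 (th p - (xs p - eta p)) k \<bullet> e p) = 0"
    and eq_dh: "\<forall>p. e p \<bullet> vsgn (e p) = 0"
    and eq_eta: "\<forall>p. th p = 0"
    and eq_th: "\<forall>p. - alpha *\<^sub>R th p
                   - (xi p p + transpose (G p) *v pplus (lam p)
                      + (\<Sum>k<nq p. max 0 (om p k + Brow p k \<bullet> eta p - bv p k) *\<^sub>R Brow p k)) = 0"
    and eq_om: "\<forall>p. \<forall>k<nq p. Brow p k \<bullet> th p - om p k + max 0 (om p k + Brow p k \<bullet> eta p - bv p k) = 0"
    and eq_lam: "\<forall>p. - lam p + pplus (lam p) + (G p *v eta p - g p)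
                   - (\<Sum>l\<in>UNIV. a p l *\<^sub>R (rho p - rho l))
                   - (\<Sum>l\<in>UNIV. a p l *\<^sub>R (pplus (lam p) - pplus (lam l))) = 0"
    and eq_rho: "\<forall>p. (\<Sum>l\<in>UNIV. a p l *\<^sub>R (pplus (lam p) - pplus (lam l))) = 0"
    and eq_xi: "\<forall>p k. c k = c p \<longrightarrow>
                  - beta *\<^sub>R (xi p k + (\<Sum>l\<in>UNIV. a p l *\<^sub>R (xi p k - xi l k))
                      + (\<Sum>l\<in>UNIV. a p l *\<^sub>R (zeta p k - zeta l k))
                      - pgrad (J p) (\<chi> q. s p q) k) = 0"
    and eq_zeta: "\<forall>p k. c k = c p \<longrightarrow> beta *\<^sub>R (\<Sum>l\<in>UNIV. a p l *\<^sub>R (xi p k - xi l k)) = 0"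
    and s_own: "\<forall>p. s p p = eta p"
    and eq_s: "\<forall>p q. q \<noteq> p \<longrightarrow> - kappa *\<^sub>R (\<Sum>l\<in>UNIV. abar p l *\<^sub>R (s p q - s l q)) = 0"
  shows "is_NE c J nq Brow bv G g (\<chi> q. xs q)"
proof -
  have th: "th p = 0" and eta: "eta p = xs p" for p
    using eq_eta eq_xhat by simp_all
  define X where "X = (\<chi> q. xs q)"
  have a_nonneg: "\<forall>p l. 0 \<le> a p l" and abar_nonneg: "\<forall>p l. 0 \<le> abar p l"
    using A4_a01 A4_abar01 by (metis order_refl zero_le_one)+
  have coalition_graph: "closed_strongly_connected a {q. c q = c p}" for p
    using A4_ain A4_aconn by (intro closed_strongly_connected_fibre) auto
  have estimation_graph: "closed_strongly_connected abar UNIV"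
    using closed_strongly_connected_fibre[of abar "\<lambda>_. ()"] A4_abarconn by auto
  have estimates: "(\<chi> q. s p q) = X" for p
  proof -
    have "s p q = s q q" for q
      using eq_s gains
      by (intro laplacian_consensus[OF abar_nonneg estimation_graph, of q "\<lambda>l. s l q"]) auto
    then show ?thesis
      using s_own eta by (simp add: X_def vec_eq_iff)
  qed
  obtain DJ where DJ: "\<And>p x. GDERIV (J p) x :> DJ p x"
    using A1_C1 by metis
  have tracking: "real (card {p. c p = c k}) *\<^sub>R xi k k = (\<Sum>p\<in>{p. c p = c k}. DJ p X $ k)" for k
    using eq_zeta eq_xi gains
    by (intro average_tracking_equilibrium[OF a_nonneg A4_asym coalition_graph,
          where xi = "\<lambda>p. xi p k" and zeta = "\<lambda>p. zeta p k"])
      (auto simp: estimates gderiv_imp_pgrad[OF DJ])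
  have om: "0 \<le> om p k \<and> om p k * (Brow p k \<bullet> xs p - bv p k) = 0 \<and> Brow p k \<bullet> xs p \<le> bv p k
      \<and> max 0 (om p k + Brow p k \<bullet> eta p - bv p k) = om p k" if "k < nq p" for p k
    using eq_om[rule_format, OF that] by (auto simp: th eta max_def split: if_splits)
  have stationary: "xi p p + transpose (G p) *v pplus (lam p) + (\<Sum>k<nq p. om p k *\<^sub>R Brow p k) = 0" for p
    using eq_th[rule_format, of p] om by (simp add: th del: minus_add_distrib)
  note multiplier_equilibrium = multiplier_equilibrium[OF a_nonneg A4_asym coalition_graph,
      where rho = rho and r = "\<lambda>q. G q *v X $ q - g q"]
  have multiplier: "pplus (lam q) = pplus (lam p)" if "c q = c p" for p q
    using eq_rho eq_lam that by (intro multiplier_equilibrium(1)) (simp_all add: X_def eta)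
  have slack: "pplus (lam p) \<bullet> (\<Sum>q\<in>{q. c q = c p}. G q *v X $ q - g q) = 0" for p
    using eq_rho eq_lam by (intro multiplier_equilibrium(2)) (simp_all add: X_def eta)
  show ?thesis
    unfolding is_NE_def X_def[symmetric]
  proof (intro allI impI)
    fix i y assume y: "(\<forall>q. c q \<noteq> i \<longrightarrow> y $ q = X $ q) \<and> feasible c nq Brow bv G g y"
    obtain p where "c p = i"
      using coal_nonempty by blast
    show "coal_cost c J i X \<le> coal_cost c J i y"
    proof (rule coalition_kkt_imp_optimal[where h = hbar and D = "\<lambda>q. DJ q X" and \<xi> = "\<lambda>p. xi p p"
          and om = om and L = "pplus (lam p)"])
      show "\<forall>q. c q = i \<longrightarrow> strongly_convex_block c nq Brow bv i hbar (J q)"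
        using A1_sc by blast
      show "\<forall>p'. c p' = i \<longrightarrow> xi p' p' + transpose (G p') *v pplus (lam p)
          + (\<Sum>k<nq p'. om p' k *\<^sub>R Brow p' k) = 0"
        using stationary multiplier \<open>c p = i\<close> by metis
      show "pplus (lam p) \<bullet> (\<Sum>q\<in>{q. c q = i}. G q *v X $ q - g q) = 0"
        using slack \<open>c p = i\<close> by blast
    qed (use A1_hbar DJ om tracking y in \<open>auto simp: X_def Omega_def pplus_def\<close>)
  qed
qed

end
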